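(* Let $(M,\mathcal{T})$ be a closed pseudo $3$-manifold with $v(e)\ge9$ for each $e\in E$. Let $\{l(t):t\in[0,\infty)\}\subset\mathbb{R}^E_{>0}$ be the solution of the extended Ricci flow with initial data $l^0\in\mathbb{R}^E_{>0}$ satisfying $l^0_e\in(0,\operatorname{arccosh}b_{v(e)})$ for all $e\in E$. If there exists $t_0>0$ such that $\sup\{l_e(t):0\le t\le t_0,\ e\in E\}\le\operatorname{arccosh}2$, then for each $e\in E$, $l_e(t)\in(0,\operatorname{arccosh}b_{v(e)}]$ for all $t\in[0,t_0]$.
   Context: A closed pseudo $3$-manifold $(M,\mathcal{T})$: a finite disjoint union $\widehat{\mathcal{T}}$ of tetrahedra with faces glued in pairs by affine homeomorphisms; $\mathcal{T}$ is the quotient complex, $E$ its edge set, $P_E$ the quotient map on edges, $v(e)=|P_E^{-1}(e)|$ the valence. For $l\in\mathbb{R}^E_{>0}$, each edge $\hat e$ of $\widehat{\mathcal{T}}$ gets length $l_{P_E(\hat e)}$; in a tetrahedron with vertices $i,j,k,h$ let $x_{ab}=\cosh$(length of $ab$) and $$\phi_{ij}=\frac{x_{ik}x_{ih}+x_{jk}x_{jh}+x_{ij}x_{ik}x_{jh}+x_{ij}x_{ih}x_{jk}-x_{ij}^2x_{kh}+x_{kh}}{\sqrt{2x_{ij}x_{ik}x_{jk}+x_{ij}^2+x_{ik}^2+x_{jk}^2-1}\sqrt{2x_{ij}x_{ih}x_{jh}+x_{ij}^2+x_{ih}^2+x_{jh}^2-1}},$$ dihedral angle $\alpha_{ij}=\arccos(\max\{-1,\min\{\phi_{ij},1\}\})$.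 $\widetilde K_e(l)=2\pi-\sum_{\hat e\in P_E^{-1}(e)}\alpha(\hat e)$. Extended Ricci flow: $\frac{d}{dt}l_e=\widetilde K_e(l)l_e$, $l(0)=l^0$ (unique solution for all $t\ge0$). Constants: $b_9=2$, $b_n=\frac{16}{1+\cos(2\pi/n)}-7$ for $n\ge10$. *)

theory Defs
  imports Complex_Main
begin

text \<open>Combinatorial model of a closed pseudo 3-manifold: a finite set Tets of
tetrahedra, each with vertices 0,1,2,3. A face of tetrahedron t is written (t,k),
the face opposite vertex k. The face pairing gl glues every face to a different face
(involution without fixed points, so all faces are glued in pairs), and the affine
homeomorphism of a glued face is determined by the vertex bijection sig f between
the vertex sets of the two faces (sig of the partner face being its inverse).\<close>

definition Verts :: "nat set" where "Verts = {0..3}"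

definition Faces :: "'t set \<Rightarrow> ('t \<times> nat) set" where
  "Faces Tets = Tets \<times> Verts"

definition closed_pseudo_3_manifold ::
  "'t set \<Rightarrow> ('t \<times> nat \<Rightarrow> 't \<times> nat) \<Rightarrow> ('t \<times> nat \<Rightarrow> nat \<Rightarrow> nat) \<Rightarrow> bool" where
  "closed_pseudo_3_manifold Tets gl sig \<longleftrightarrow>
     finite Tets \<and>
     (\<forall>f \<in> Faces Tets.
        gl f \<in> Faces Tets \<and> gl f \<noteq> f \<and> gl (gl f) = f \<and>
        bij_betw (sig f) (Verts - {snd f}) (Verts - {snd (gl f)}) \<and>
        (\<forall>i \<in> Verts - {snd f}. sig (gl f) (sig f i) = i))"

definition HEdges :: "'t set \<Rightarrow> ('t \<times> nat set) set" where
  "HEdges Tets = {(t, {i, j}) | t i j. t \<in> Tets \<and> i \<in> Verts \<and> j \<in> Verts \<and> i \<noteq> j}"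

definition edge_step ::
  "'t set \<Rightarrow> ('t \<times> nat \<Rightarrow> 't \<times> nat) \<Rightarrow> ('t \<times> nat \<Rightarrow> nat \<Rightarrow> nat)
     \<Rightarrow> (('t \<times> nat set) \<times> ('t \<times> nat set)) set" where
  "edge_step Tets gl sig =
     {((t, {i, j}), (fst (gl (t, k)), {sig (t, k) i, sig (t, k) j})) | t k i j.
        (t, k) \<in> Faces Tets \<and> i \<in> Verts - {k} \<and> j \<in> Verts - {k} \<and> i \<noteq> j}"

definition edge_equiv where
  "edge_equiv Tets gl sig = (edge_step Tets gl sig \<union> (edge_step Tets gl sig)\<inverse>)\<^sup>*"

definition PE where
  "PE Tets gl sig x = edge_equiv Tets gl sig `` {x}"

definition Edges where
  "Edges Tets gl sig = PE Tets gl sig ` HEdges Tets"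

definition valence where
  "valence Tets gl sig e = card {x \<in> HEdges Tets. PE Tets gl sig x = e}"

text \<open>phi_ij in a tetrahedron with vertices i,j,k,h; x a b = cosh(length of ab).\<close>
definition phi :: "(nat \<Rightarrow> nat \<Rightarrow> real) \<Rightarrow> nat \<Rightarrow> nat \<Rightarrow> nat \<Rightarrow> nat \<Rightarrow> real" where
  "phi x i j k h =
     (x i k * x i h + x j k * x j h + x i j * x i k * x j h + x i j * x i h * x j k
        - (x i j)\<^sup>2 * x k h + x k h) /
     (sqrt (2 * x i j * x i k * x j k + (x i j)\<^sup>2 + (x i k)\<^sup>2 + (x j k)\<^sup>2 - 1) *
      sqrt (2 * x i j * x i h * x j h + (x i j)\<^sup>2 + (x i h)\<^sup>2 + (x j h)\<^sup>2 - 1))"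

text \<open>Dihedral angle at the edge (t,s) of the disjoint union, for edge lengths l on E
(phi_ij is symmetric in i,j and in k,h, so the choice of order is irrelevant).\<close>
definition dihedral where
  "dihedral Tets gl sig (l :: ('t \<times> nat set) set \<Rightarrow> real) ed =
     (let t = fst ed; s = snd ed; i = Min s; j = Max s;
          r = Verts - s; k = Min r; h = Max r;
          x = (\<lambda>a b. cosh (l (PE Tets gl sig (t, {a, b}))))
      in arccos (max (-1) (min (phi x i j k h) 1)))"

definition curvature where
  "curvature Tets gl sig l e =
     2 * pi - (\<Sum>ed \<in> {x \<in> HEdges Tets. PE Tets gl sig x = e}. dihedral Tets gl sig l ed)"

definition bconst :: "nat \<Rightarrow> real" where
  "bconst n = (if n = 9 then 2 else 16 / (1 + cos (2 * pi / real n)) - 7)"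

end

(*
  Suppose an edge e of valence n >= 10 reaches length arcosh b_n while all edge lengths are at
  most arcosh 2. On [1, 2] the cosine phi_ij of a dihedral angle at e is nondecreasing in each of
  the four cosh-lengths adjacent to the edge ij, so it stays below its value when they all equal 2
  and the opposite edge is longer than 0, namely below (9 - b_n) / (b_n + 7) = cos (2 pi / n).
  Then each of the n dihedral angles at e exceeds 2 pi / n, the curvature at e is negative, and
  the flow decreases l_e: it can never cross arcosh b_n. For n = 9 we have b_9 = 2 and the bound
  is the hypothesis on the supremum.
*)
theory Submission
  imports Defs "HOL-Analysis.Analysis"
begin

lemma linear_div_sqrt_quadratic_mono:
  fixes \<alpha> \<beta> \<gamma> \<delta> x1 x2 :: real
  assumes "x1 \<le> x2"
    and pos: "\<And>x. x1 \<le> x \<Longrightarrow> x \<le> x2 \<Longrightarrow> x\<^sup>2 + 2*\<gamma>*x + \<delta> > 0"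
    and num: "\<And>x. x1 \<le> x \<Longrightarrow> x \<le> x2 \<Longrightarrow> x*(\<alpha>*\<gamma> - \<beta>) + \<alpha>*\<delta> - \<beta>*\<gamma> \<ge> 0"
  shows "(\<alpha>*x1 + \<beta>) / sqrt (x1\<^sup>2 + 2*\<gamma>*x1 + \<delta>) \<le> (\<alpha>*x2 + \<beta>) / sqrt (x2\<^sup>2 + 2*\<gamma>*x2 + \<delta>)"
proof (rule DERIV_nonneg_imp_nondecreasing[OF assms(1)])
  fix x assume x: "x1 \<le> x" "x \<le> x2"
  define q where "q = x\<^sup>2 + 2*\<gamma>*x + \<delta>"
  have q: "q > 0" using pos[OF x] by (simp add: q_def)
  have "((\<lambda>x. (\<alpha>*x + \<beta>) / sqrt (x\<^sup>2 + 2*\<gamma>*x + \<delta>)) has_real_derivative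
          (x*(\<alpha>*\<gamma> - \<beta>) + \<alpha>*\<delta> - \<beta>*\<gamma>) / (q * sqrt q)) (at x)"
    using q
    by (auto intro!: derivative_eq_intros simp: q_def[symmetric])
      (simp add: divide_simps, simp add: q_def algebra_simps power2_eq_square)
  moreover have "(x*(\<alpha>*\<gamma> - \<beta>) + \<alpha>*\<delta> - \<beta>*\<gamma>) / (q * sqrt q) \<ge> 0"
    using num[OF x] q by simp
  ultimately show "\<exists>y. ((\<lambda>x. (\<alpha>*x + \<beta>) / sqrt (x\<^sup>2 + 2*\<gamma>*x + \<delta>)) has_real_derivative y) (at x) \<and> 0 \<le> y"
    by blast
qed

definition phi6 :: "real \<Rightarrow> real \<Rightarrow> real \<Rightarrow> real \<Rightarrow> real \<Rightarrow> real \<Rightarrow> real" where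
  "phi6 a b c d e f = (b*c + d*e + a*b*e + a*c*d - a\<^sup>2*f + f) /
     (sqrt (2*a*b*d + a\<^sup>2 + b\<^sup>2 + d\<^sup>2 - 1) * sqrt (2*a*c*e + a\<^sup>2 + c\<^sup>2 + e\<^sup>2 - 1))"

lemma phi_eq_phi6: "phi x i j k h = phi6 (x i j) (x i k) (x i h) (x j k) (x j h) (x k h)"
  unfolding phi_def phi6_def ..

lemma phi6_swap_kh: "phi6 a b c d e f = phi6 a c b e d f"
  unfolding phi6_def by (simp add: algebra_simps)

lemma phi6_swap_ij: "phi6 a b c d e f = phi6 a d e b c f"
  unfolding phi6_def by (simp add: algebra_simps)

lemma phi6_mono:
  fixes a b c d e f :: real
  assumes "1 \<le> a" "1 \<le> f" "1 \<le> b" "b \<le> 2" "1 \<le> c" "c \<le> 2" "1 \<le> d" "d \<le> 2" "1 \<le> e" "e \<le> 2"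
  shows "phi6 a b c d e f \<le> phi6 a 2 c d e f"
proof -
  define \<alpha> where "\<alpha> = c + a*e"
  define \<beta> where "\<beta> = d*e + a*c*d - a\<^sup>2*f + f"
  define \<gamma> where "\<gamma> = a*d"
  define \<delta> where "\<delta> = d\<^sup>2 + a\<^sup>2 - 1"
  define D where "D = 2*a*c*e + a\<^sup>2 + c\<^sup>2 + e\<^sup>2 - 1"
  have one_le_mult: "1 \<le> y * z" if "1 \<le> y" "1 \<le> z" for y z :: real
    using that mult_mono[of 1 y 1 z] by simp
  have "D > 0" unfolding D_def using assms by (smt (verit) mult_nonneg_nonneg one_le_power)
  have phi6_eq: "phi6 a x c d e f = (\<alpha>*x + \<beta>) / sqrt (x\<^sup>2 + 2*\<gamma>*x + \<delta>) / sqrt D" for x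
    unfolding phi6_def \<alpha>_def \<beta>_def \<gamma>_def \<delta>_def D_def
    by (simp add: algebra_simps)
  have "(\<alpha>*b + \<beta>) / sqrt (b\<^sup>2 + 2*\<gamma>*b + \<delta>) \<le> (\<alpha>*2 + \<beta>) / sqrt (2\<^sup>2 + 2*\<gamma>*2 + \<delta>)"
  proof (rule linear_div_sqrt_quadratic_mono)
    fix x :: real assume x: "b \<le> x" "x \<le> 2"
    show "x\<^sup>2 + 2*\<gamma>*x + \<delta> > 0" unfolding \<gamma>_def \<delta>_def using assms x
      by (smt (verit) mult_nonneg_nonneg one_le_power)
    have "x*(\<alpha>*\<gamma> - \<beta>) + \<alpha>*\<delta> - \<beta>*\<gamma> = (a\<^sup>2 - 1) * ((2 - c)*(d\<^sup>2 - 1) + 2*(2 - d)*(1 + d) + (x*d*e - d) + (a*e - 1) + (x*f - 1) + (a*d*f - d))"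
      unfolding \<alpha>_def \<beta>_def \<gamma>_def \<delta>_def by (simp add: algebra_simps power2_eq_square)
    moreover have "0 \<le> (2 - c)*(d\<^sup>2 - 1) + 2*(2 - d)*(1 + d) + (x*d*e - d) + (a*e - 1) + (x*f - 1) + (a*d*f - d)"
    proof -
      have "(2 - c)*(d\<^sup>2 - 1) \<ge> 0" "2*(2 - d)*(1 + d) \<ge> 0"
        using assms by simp_all
      moreover have "x*d*e \<ge> d" "a*e \<ge> 1" "x*f \<ge> 1" "a*d*f \<ge> d"
        using assms x one_le_mult by (simp_all add: mult_le_cancel_right1)
      ultimately show ?thesis by linarith
    qed
    moreover have "a\<^sup>2 - 1 \<ge> 0" using assms by simp
    ultimately show "x*(\<alpha>*\<gamma> - \<beta>) + \<alpha>*\<delta> - \<beta>*\<gamma> \<ge> 0" by simp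
  qed (use assms in auto)
  then show ?thesis unfolding phi6_eq using \<open>D > 0\<close> by (intro divide_right_mono) auto
qed

lemma phi6_all_2:
  assumes "a > 1"
  shows "phi6 a 2 2 2 2 f = (8 - f*(a - 1)) / (a + 7)"
proof -
  have D: "2*a*2*2 + a\<^sup>2 + 2\<^sup>2 + 2\<^sup>2 - 1 = (a + 1)*(a + 7)"
    by (simp add: algebra_simps power2_eq_square)
  have "sqrt ((a + 1)*(a + 7)) * sqrt ((a + 1)*(a + 7)) = (a + 1)*(a + 7)"
    using assms by simp
  then have "phi6 a 2 2 2 2 f = (a + 1)*(8 - f*(a - 1)) / ((a + 1)*(a + 7))"
    unfolding phi6_def D by (simp add: algebra_simps power2_eq_square)
  then show ?thesis using assms by simp
qed

lemma phi6_less: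
  fixes a b c d e f :: real
  assumes "1 < a" "1 < f" "1 \<le> b" "b \<le> 2" "1 \<le> c" "c \<le> 2" "1 \<le> d" "d \<le> 2" "1 \<le> e" "e \<le> 2"
  shows "phi6 a b c d e f < (9 - a) / (a + 7)"
proof -
  note mono = phi6_mono[of a f, OF less_imp_le less_imp_le, OF assms(1,2)]
  have "phi6 a b c d e f \<le> phi6 a 2 c d e f" using mono assms by auto
  also have "\<dots> = phi6 a c 2 e d f" by (rule phi6_swap_kh)
  also have "\<dots> \<le> phi6 a 2 2 e d f" using mono assms by auto
  also have "\<dots> = phi6 a d e 2 2 f" by (metis phi6_swap_kh phi6_swap_ij)
  also have "\<dots> \<le> phi6 a 2 e 2 2 f" using mono assms by auto
  also have "\<dots> = phi6 a e 2 2 2 f" by (rule phi6_swap_kh)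
  also have "\<dots> \<le> phi6 a 2 2 2 2 f" using mono assms by auto
  also have "\<dots> = (8 - f*(a - 1)) / (a + 7)" using assms by (simp add: phi6_all_2)
  also have "\<dots> < (9 - a) / (a + 7)"
  proof -
    have "f*(a - 1) > 1*(a - 1)" using assms by (intro mult_strict_right_mono) auto
    then have "8 - f*(a - 1) < 9 - a" by simp
    then show ?thesis using assms by (simp add: divide_strict_right_mono)
  qed
  finally show ?thesis .
qed

lemma cosh_in_Ioc_1_2:
  fixes y :: real
  assumes "0 < y" "y \<le> arcosh 2"
  shows "1 < cosh y" "cosh y \<le> 2"
proof -
  show "1 < cosh y" using cosh_real_strict_mono[of 0 y] assms by simp
  show "cosh y \<le> 2" using cosh_real_nonneg_le_iff[of y "arcosh 2"] assms by simp
qed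

lemma Verts_split_at_edge:
  assumes "i \<in> Verts" "j \<in> Verts" "i \<noteq> j"
  defines "ks \<equiv> Verts - {i, j}"
  shows "{Min {i, j}, Max {i, j}} = {i, j}"
    and "distinct [Min {i, j}, Max {i, j}, Min ks, Max ks]"
    and "{Min {i, j}, Max {i, j}, Min ks, Max ks} \<subseteq> Verts"
proof -
  have V: "Verts = {0, 1, 2, 3}" unfolding Verts_def by auto
  show "{Min {i, j}, Max {i, j}} = {i, j}" by auto
  show "distinct [Min {i, j}, Max {i, j}, Min ks, Max ks]"
    using assms(1-3) unfolding ks_def V by (auto simp: insert_Diff_if)
  show "{Min {i, j}, Max {i, j}, Min ks, Max ks} \<subseteq> Verts"
    using assms(1-3) unfolding ks_def V by (auto simp: insert_Diff_if)
qed

lemma dihedral_gt_arccos: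
  fixes l :: "('t \<times> nat set) set \<Rightarrow> real"
  assumes ed: "ed \<in> HEdges Tets"
    and short: "\<forall>e \<in> Edges Tets gl sig. 0 < l e \<and> l e \<le> arcosh 2"
    and a: "1 < a" "l (PE Tets gl sig ed) = arcosh a"
  shows "arccos ((9 - a) / (a + 7)) < dihedral Tets gl sig l ed"
proof -
  obtain t i j where ed_eq: "ed = (t, {i, j})" and t: "t \<in> Tets"
    and ij: "i \<in> Verts" "j \<in> Verts" "i \<noteq> j"
    using ed unfolding HEdges_def by blast
  define x where "x = (\<lambda>u v. cosh (l (PE Tets gl sig (t, {u, v}))))"
  have x_bounds: "1 < x u v" "x u v \<le> 2" if "u \<in> Verts" "v \<in> Verts" "u \<noteq> v" for u v
  proof -
    have "PE Tets gl sig (t, {u, v}) \<in> Edges Tets gl sig"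
      unfolding Edges_def HEdges_def using t that by blast
    then show "1 < x u v" "x u v \<le> 2"
      unfolding x_def using short cosh_in_Ioc_1_2 by auto
  qed
  define i' where "i' = Min {i, j}"
  define j' where "j' = Max {i, j}"
  define k where "k = Min (Verts - {i, j})"
  define h where "h = Max (Verts - {i, j})"
  note split = Verts_split_at_edge[OF ij, folded i'_def j'_def k_def h_def]
  have "x i' j' = a" unfolding x_def split(1) using a by (simp add: ed_eq)
  then have "phi x i' j' k h = phi6 a (x i' k) (x i' h) (x j' k) (x j' h) (x k h)"
    by (simp add: phi_eq_phi6)
  also have "\<dots> < (9 - a) / (a + 7)"
    using split(2,3) a(1) by (intro phi6_less; simp add: less_imp_le x_bounds)
  finally have "phi x i' j' k h < (9 - a) / (a + 7)" .
  moreover have "-1 < (9 - a) / (a + 7)" "(9 - a) / (a + 7) < 1"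
    using a(1) by (simp_all add: field_simps)
  ultimately have "max (-1) (min (phi x i' j' k h) 1) < (9 - a) / (a + 7)"
    by simp
  then have "arccos ((9 - a) / (a + 7)) < arccos (max (-1) (min (phi x i' j' k h) 1))"
    using \<open>(9 - a) / (a + 7) < 1\<close> by (intro arccos_less_arccos) auto
  also have "\<dots> = dihedral Tets gl sig l ed"
    unfolding dihedral_def Let_def ed_eq x_def i'_def j'_def k_def h_def by simp
  finally show ?thesis .
qed

lemma bconst_gt_1_and_arccos:
  assumes "n \<ge> 10"
  shows "1 < bconst n" and "arccos ((9 - bconst n) / (bconst n + 7)) = 2*pi / n"
proof -
  define c where "c = cos (2*pi / n)"
  have angle: "0 < 2*pi / n" "2*pi / n < pi/2"
    using assms pi_gt_zero by (simp_all add: field_simps)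
  have c: "0 < c" "c < 1"
    unfolding c_def using angle cos_monotone_0_pi[of 0 "2*pi / n"] by (auto intro: cos_gt_zero_pi)
  have b: "bconst n = 16 / (1 + c) - 7" unfolding bconst_def c_def using assms by simp
  show "1 < bconst n" unfolding b using c by (simp add: field_simps)
  have "(9 - bconst n) / (bconst n + 7) = c" unfolding b using c by (simp add: field_simps)
  then show "arccos ((9 - bconst n) / (bconst n + 7)) = 2*pi / n"
    unfolding c_def using angle by (simp add: arccos_cos)
qed

lemma curvature_neg_at_bconst:
  fixes l :: "('t \<times> nat set) set \<Rightarrow> real"
  assumes short: "\<forall>e \<in> Edges Tets gl sig. 0 < l e \<and> l e \<le> arcosh 2"
    and n: "valence Tets gl sig e \<ge> 10"
    and le: "l e = arcosh (bconst (valence Tets gl sig e))"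
  shows "curvature Tets gl sig l e < 0"
proof -
  define n where "n = valence Tets gl sig e"
  define A where "A = {ed \<in> HEdges Tets. PE Tets gl sig ed = e}"
  have card_A: "card A = n" unfolding A_def n_def valence_def ..
  then have "finite A" "A \<noteq> {}" using n unfolding n_def by (auto intro: card_ge_0_finite)
  then have "(\<Sum>ed \<in> A. 2*pi / n) < (\<Sum>ed \<in> A. dihedral Tets gl sig l ed)"
  proof (rule sum_strict_mono)
    fix ed assume "ed \<in> A"
    then have "ed \<in> HEdges Tets" "l (PE Tets gl sig ed) = arcosh (bconst n)"
      unfolding A_def n_def using le by auto
    then show "2*pi / n < dihedral Tets gl sig l ed"
      using dihedral_gt_arccos[OF _ short] bconst_gt_1_and_arccos n unfolding n_def by metis
  qed
  moreover have "(\<Sum>ed \<in> A. 2*pi / n) = 2*pi" using card_A n unfolding n_def by simp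
  ultimately show ?thesis unfolding curvature_def A_def by simp
qed

lemma le_barrier_if_deriv_neg_at_barrier:
  fixes g :: "real \<Rightarrow> real"
  assumes cont: "continuous_on {a..b} g"
    and start: "g a < B"
    and deriv: "\<And>s. a \<le> s \<Longrightarrow> s < b \<Longrightarrow> g s = B \<Longrightarrow>
                  \<exists>D < 0. (g has_real_derivative D) (at s within {a..b})"
    and t: "t \<in> {a..b}"
  shows "g t \<le> B"
proof (rule ccontr)
  assume "\<not> g t \<le> B"
  then have gt: "B < g t" by simp
  define S where "S = {a..t} \<inter> g -` {..B}"
  have "closed S"
    unfolding S_def using t continuous_on_subset[OF cont]
    by (intro continuous_closed_preimage) auto
  moreover have "a \<in> S" "bdd_above S" unfolding S_def using t start by auto
  ultimately have s_in: "Sup S \<in> S" by (intro closed_contains_Sup) auto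
  define s where "s = Sup S"
  have s: "a \<le> s" "s \<le> t" "g s \<le> B" using s_in unfolding s_def S_def by auto
  have above_s: "x \<le> s" if "x \<in> S" for x
    using that \<open>bdd_above S\<close> unfolding s_def by (simp add: cSup_upper)
  obtain y where y: "s \<le> y" "y \<le> t" "g y = B"
    using IVT'[of g s B t] s gt continuous_on_subset[OF cont, of "{s..t}"] t by auto
  then have "y \<in> S" unfolding S_def using s by auto
  then have gs: "g s = B" using above_s y by force
  with gt have "s < t" using s(2) by (cases "s = t") auto
  with t obtain D where "D < 0" and der: "(g has_real_derivative D) (at s within {a..b})"
    using deriv s gs by force
  then obtain d where d: "d > 0" "\<And>h. h > 0 \<Longrightarrow> s + h \<in> {a..b} \<Longrightarrow> h < d \<Longrightarrow> g (s + h) < g s"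
    using has_real_derivative_neg_dec_right by blast
  define h where "h = min (d/2) (t - s)"
  have h: "0 < h" "h < d" "s + h \<le> t" using d \<open>s < t\<close> unfolding h_def by auto
  then have "g (s + h) < B" using d(2) s t gs by auto
  then have "s + h \<in> S" unfolding S_def using s h by auto
  with above_s h show False by fastforce
qed

theorem proposition3p5:
  fixes Tets :: "'t set"
    and gl :: "'t \<times> nat \<Rightarrow> 't \<times> nat"
    and sig :: "'t \<times> nat \<Rightarrow> nat \<Rightarrow> nat"
    and l :: "real \<Rightarrow> ('t \<times> nat set) set \<Rightarrow> real"
    and l0 :: "('t \<times> nat set) set \<Rightarrow> real"
    and t0 :: real
  assumes M: "closed_pseudo_3_manifold Tets gl sig"
    and val: "\<forall>e \<in> Edges Tets gl sig. valence Tets gl sig e \<ge> 9"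
    and pos: "\<forall>t \<ge> 0. \<forall>e \<in> Edges Tets gl sig. l t e > 0"
    and flow: "\<forall>t \<ge> 0. \<forall>e \<in> Edges Tets gl sig.
                 ((\<lambda>s. l s e) has_real_derivative
                    (curvature Tets gl sig (l t) e * l t e)) (at t within {0..})"
    and init: "\<forall>e \<in> Edges Tets gl sig. l 0 e = l0 e"
    and l0_bd: "\<forall>e \<in> Edges Tets gl sig.
                  0 < l0 e \<and> l0 e < arcosh (bconst (valence Tets gl sig e))"
    and t0: "t0 > 0"
    and sup: "\<forall>t \<in> {0..t0}. \<forall>e \<in> Edges Tets gl sig. l t e \<le> arcosh 2"
  shows "\<forall>e \<in> Edges Tets gl sig. \<forall>t \<in> {0..t0}.
           0 < l t e \<and> l t e \<le> arcosh (bconst (valence Tets gl sig e))"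
proof (intro ballI conjI)
  fix e t assume e: "e \<in> Edges Tets gl sig" and t: "t \<in> {0..t0}"
  show "0 < l t e" using pos e t by auto
  show "l t e \<le> arcosh (bconst (valence Tets gl sig e))"
  proof (cases "valence Tets gl sig e = 9")
    case True
    then show ?thesis using sup e t by (simp add: bconst_def)
  next
    case False
    with val e have n: "valence Tets gl sig e \<ge> 10" by force
    have deriv: "((\<lambda>s. l s e) has_real_derivative curvature Tets gl sig (l s) e * l s e)
        (at s within {0..t0})" if "s \<in> {0..t0}" for s
      using flow e that by (force intro: has_field_derivative_subset[of _ _ _ "{0..}"])
    show ?thesis
    proof (rule le_barrier_if_deriv_neg_at_barrier[where g = "\<lambda>s. l s e"])
      show "continuous_on {0..t0} (\<lambda>s. l s e)" using deriv by (rule DERIV_continuous_on)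
      show "l 0 e < arcosh (bconst (valence Tets gl sig e))" using init l0_bd e by auto
      fix s assume s: "0 \<le> s" "s < t0" and "l s e = arcosh (bconst (valence Tets gl sig e))"
      then have "curvature Tets gl sig (l s) e < 0"
        using curvature_neg_at_bconst[OF _ n] pos sup by auto
      then have "curvature Tets gl sig (l s) e * l s e < 0"
        using pos e s by (simp add: mult_neg_pos)
      then show "\<exists>D < 0. ((\<lambda>s. l s e) has_real_derivative D) (at s within {0..t0})"
        using deriv s by auto
    qed (use t in auto)
  qed
qed

end
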